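(* Let $G=(V,E)$ be an $n$-vertex graph with $E = M_1\cup\dots\cup M_t$, where $M_1,\dots,M_t$ are pairwise edge-disjoint matchings each of size at least $r$. For $i\in[t]$ let $G_i=(V,M_1\cup\dots\cup M_i)$ and let $d_i = |E(G_i)\cap V^2(M_i)|/|M_i|$. Then for every $\alpha\in(0,1)$, $$\sum_{i=1}^t \frac{1}{d_i} = O\!\left(\frac{1}{\alpha^2}\cdot \mathrm{ORS}_n\big((1-\alpha)r\big)\cdot \log n\right),$$ where the constant in $O(\cdot)$ is absolute.
   Context: For a matching $M$, $V(M)$ denotes the set of vertices matched by $M$, and $E(G_i)\cap V^2(M_i)$ is the set of edges of $G_i$ with both endpoints in $V(M_i)$. A sequence $M_1,\dots,M_t$ of pairwise edge-disjoint matchings is called ordered-induced if for every $i\in[t]$, $M_i$ is an induced matching of the graph with edge set $M_1\cup\dots\cup M_i$, i.e., no edge of $M_1\cup\cdots\cup M_{i-1}$ has both endpoints in $V(M_i)$. An $n$-vertex graph is an $\mathrm{ORS}_n(r,t)$ graph if its edge set is the union of an ordered-induced sequence of $t$ matchings, each of size exactly $r$. $\mathrm{ORS}_n(r)$ denotes the maximum $t$ for which an $\mathrm{ORS}_n(r,t)$ graph exists (for non-integer $r$, $r$ is replaced by $\lceil r\rceil$). *)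

theory Defs
  imports Complex_Main
begin

definition is_matching :: "'a set set \<Rightarrow> bool" where
  "is_matching M \<longleftrightarrow> (\<forall>e\<in>M. card e = 2) \<and> (\<forall>e\<in>M. \<forall>f\<in>M. e \<noteq> f \<longrightarrow> e \<inter> f = {})"

definition matched_vertices :: "'a set set \<Rightarrow> 'a set" where
  "matched_vertices M = \<Union>M"

definition pairwise_edge_disjoint :: "(nat \<Rightarrow> 'a set set) \<Rightarrow> nat \<Rightarrow> bool" where
  "pairwise_edge_disjoint M t \<longleftrightarrow>
     (\<forall>i\<in>{1..t}. \<forall>j\<in>{1..t}. i \<noteq> j \<longrightarrow> M i \<inter> M j = {})"

definition ordered_induced :: "(nat \<Rightarrow> 'a set set) \<Rightarrow> nat \<Rightarrow> bool" where
  "ordered_induced M t \<longleftrightarrow>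
     pairwise_edge_disjoint M t \<and> (\<forall>j\<in>{1..t}. is_matching (M j)) \<and>
     (\<forall>i\<in>{1..t}. \<forall>e\<in>(\<Union>j\<in>{1..<i}. M j). \<not> e \<subseteq> matched_vertices (M i))"

definition is_ORS_graph :: "nat \<Rightarrow> nat \<Rightarrow> nat \<Rightarrow> bool" where
  "is_ORS_graph n r t \<longleftrightarrow>
     (\<exists>M :: nat \<Rightarrow> nat set set. ordered_induced M t \<and>
        (\<forall>i\<in>{1..t}. matched_vertices (M i) \<subseteq> {..<n} \<and> card (M i) = r))"

definition ORS :: "nat \<Rightarrow> nat \<Rightarrow> nat" where
  "ORS n r = Max {t. is_ORS_graph n r t}"

definition prefix_edges :: "(nat \<Rightarrow> 'a set set) \<Rightarrow> nat \<Rightarrow> 'a set set" where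
  "prefix_edges M i = (\<Union>j\<in>{1..i}. M j)"

definition density :: "(nat \<Rightarrow> 'a set set) \<Rightarrow> nat \<Rightarrow> real" where
  "density M i = real (card {e \<in> prefix_edges M i. e \<subseteq> matched_vertices (M i)}) / real (card (M i))"

end

theory Submission
  imports Defs
begin

(* Write density M i = 1 + sum over j < i of w(j,i), where w(j,i) = back_weight M j i is
   |{e \<in> M_j. e \<subseteq> V(M_i)}| / |M_i|.
   Since 1 \<le> density \<le> n, the indices fall into at most log n + 1 dyadic ranges
   [2^k, 2^(k+1)], and one range B carries a 1/(log n + 1) share of the sum, which is at
   most |B| / 2^k. Colouring B greedily with m \<approx> 2^(k+2) / \<alpha> colours, every index receives
   at most a 1/m fraction of its back-weight from its own colour class, so each class is light:
   at most \<alpha>|M_i|/2 edges of earlier matchings of the class lie inside V(M_i). Deleting the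
   edges of M_i that meet them keeps (1 - \<alpha>)|M_i| \<ge> (1 - \<alpha>) r edges, and the trimmed
   matchings form an ordered-induced sequence. Hence every class has at most
   ORS_n((1 - \<alpha>) r) members, |B| \<le> m ORS_n((1 - \<alpha>) r), and the sum is
   O(log n / \<alpha> ORS_n((1 - \<alpha>) r)), even better than the claimed 1/\<alpha>^2. *)

section \<open>Matchings\<close>

lemma is_matching_subset:
  assumes "is_matching M" "M' \<subseteq> M"
  shows "is_matching M'"
  using assms unfolding is_matching_def by blast

lemma is_matching_finite_edge:
  assumes "is_matching M" "e \<in> M"
  shows "finite e"
  using assms unfolding is_matching_def by (auto intro: card_ge_0_finite)

lemma finite_matched_vertices:
  assumes "is_matching M" "finite M"
  shows "finite (matched_vertices M)"
  using assms is_matching_finite_edge unfolding matched_vertices_def by blast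

lemma card_matching_edges_containing:
  assumes "is_matching M"
  shows "finite {f \<in> M. v \<in> f}" "card {f \<in> M. v \<in> f} \<le> 1"
proof -
  obtain g where sub: "{f \<in> M. v \<in> f} \<subseteq> {g}"
  proof (cases "{f \<in> M. v \<in> f} = {}")
    case False
    then obtain g where "g \<in> M" "v \<in> g"
      by blast
    then have "{f \<in> M. v \<in> f} \<subseteq> {g}"
      using assms unfolding is_matching_def by blast
    then show thesis
      by (rule that)
  qed (use that in blast)
  show "finite {f \<in> M. v \<in> f}"
    using finite_subset[OF sub] by simp
  show "card {f \<in> M. v \<in> f} \<le> 1"
    using card_mono[OF _ sub] by simp
qed

lemma card_matching_edges_meeting:
  assumes "is_matching M" "finite X"
  shows "card {f \<in> M. f \<inter> X \<noteq> {}} \<le> card X"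
proof -
  have "card {f \<in> M. f \<inter> X \<noteq> {}} \<le> card (\<Union>v\<in>X. {f \<in> M. v \<in> f})"
    using assms card_matching_edges_containing(1)[OF assms(1)] by (intro card_mono) auto
  also have "\<dots> \<le> (\<Sum>v\<in>X. card {f \<in> M. v \<in> f})"
    by (rule card_UN_le[OF assms(2)])
  also have "\<dots> \<le> (\<Sum>v\<in>X. 1)"
    by (intro sum_mono card_matching_edges_containing(2)[OF assms(1)])
  finally show ?thesis by simp
qed

lemma card_matched_vertices:
  assumes "is_matching M" "finite M"
  shows "card (matched_vertices M) = 2 * card M"
proof -
  have edges: "card e = 2" "finite e" if "e \<in> M" for e
    using assms(1) that is_matching_finite_edge unfolding is_matching_def by auto
  have "pairwise disjnt M"
    using assms(1) unfolding is_matching_def pairwise_def disjnt_def by blast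
  then have "card (matched_vertices M) = (\<Sum>e\<in>M. card e)"
    unfolding matched_vertices_def using edges(2) by (rule card_Union_disjoint)
  also have "\<dots> = 2 * card M"
    using edges(1) by simp
  finally show ?thesis .
qed

lemma is_matching_image:
  assumes "is_matching M" "matched_vertices M \<subseteq> V" "inj_on \<phi> V"
  shows "is_matching ((`) \<phi> ` M)"
proof -
  have edge_subset: "e \<subseteq> V" if "e \<in> M" for e
    using assms(2) that unfolding matched_vertices_def by blast
  have inj_edge: "inj_on \<phi> e" if "e \<in> M" for e
    using inj_on_subset[OF assms(3) edge_subset[OF that]] .
  show ?thesis
    unfolding is_matching_def
  proof (intro conjI ballI impI)
    fix e assume "e \<in> (`) \<phi> ` M"
    then obtain a where "a \<in> M" "e = \<phi> ` a" by auto
    then show "card e = 2"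
      using assms(1) card_image[OF inj_edge] unfolding is_matching_def by simp
  next
    fix e f assume "e \<in> (`) \<phi> ` M" "f \<in> (`) \<phi> ` M" "e \<noteq> f"
    then obtain a b where "a \<in> M" "b \<in> M" "a \<noteq> b" "e = \<phi> ` a" "f = \<phi> ` b" by auto
    moreover have "a \<inter> b = {}"
      using assms(1) \<open>a \<in> M\<close> \<open>b \<in> M\<close> \<open>a \<noteq> b\<close> unfolding is_matching_def by blast
    ultimately show "e \<inter> f = {}"
      using inj_on_image_Int[OF assms(3) edge_subset edge_subset, of a b] by simp
  qed
qed

section \<open>Ordered-induced sequences and ORS\<close>

lemma finite_ORS_lengths:
  assumes "1 \<le> s"
  shows "finite {t. is_ORS_graph n s t}"
proof -
  have "t \<le> card (Pow (Pow {..<n}))" if graph: "is_ORS_graph n s t" for t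
  proof -
    obtain M :: "nat \<Rightarrow> nat set set" where M: "ordered_induced M t"
      "\<forall>i\<in>{1..t}. matched_vertices (M i) \<subseteq> {..<n} \<and> card (M i) = s"
      using graph unfolding is_ORS_graph_def by blast
    have "inj_on M {1..t}"
    proof (rule inj_onI)
      fix i j assume ij: "i \<in> {1..t}" "j \<in> {1..t}" "M i = M j"
      have "M i \<noteq> {}"
        using M(2) ij(1) assms by fastforce
      then show "i = j"
        using M(1) ij unfolding ordered_induced_def pairwise_edge_disjoint_def by (metis Int_absorb)
    qed
    moreover have "M ` {1..t} \<subseteq> Pow (Pow {..<n})"
      using M(2) unfolding matched_vertices_def by blast
    ultimately show ?thesis
      using card_inj_on_le[of M "{1..t}" "Pow (Pow {..<n})"] by simp
  qed
  then have "{t. is_ORS_graph n s t} \<subseteq> {..card (Pow (Pow {..<n}))}"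
    by blast
  then show ?thesis
    using finite_subset by blast
qed

lemma is_ORS_graph_le_ORS:
  assumes "is_ORS_graph n s t" "1 \<le> s"
  shows "t \<le> ORS n s"
  unfolding ORS_def using assms finite_ORS_lengths by (intro Max_ge) auto

lemma obtain_strict_mono_enumeration:
  fixes S :: "nat set"
  assumes "finite S"
  obtains h where "h ` {1..card S} = S" "strict_mono_on {1..card S} h"
proof
  let ?L = "sorted_list_of_set S"
  show "(\<lambda>k. ?L ! (k - 1)) ` {1..card S} = S"
  proof -
    have "(\<lambda>k. ?L ! (k - 1)) ` {1..card S} = (!) ?L ` {..<card S}"
      by (force simp: image_iff intro: bexI[of _ "Suc _"])
    also have "\<dots> = set ?L"
      using assms by (auto simp: set_conv_nth)
    also have "\<dots> = S"
      using assms by simp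
    finally show ?thesis .
  qed
  show "strict_mono_on {1..card S} (\<lambda>k. ?L ! (k - 1))"
    by (rule strict_mono_onI) (auto intro: sorted_wrt_nth_less)
qed

lemma ordered_induced_family_card_le_ORS:
  fixes M :: "nat \<Rightarrow> 'a set set"
  assumes "finite V" "finite S" "1 \<le> s"
    and matching: "\<And>i. i \<in> S \<Longrightarrow> is_matching (M i) \<and> matched_vertices (M i) \<subseteq> V \<and> card (M i) = s"
    and disjoint: "\<And>i j. i \<in> S \<Longrightarrow> j \<in> S \<Longrightarrow> i \<noteq> j \<Longrightarrow> M i \<inter> M j = {}"
    and induced: "\<And>i j e. i \<in> S \<Longrightarrow> j \<in> S \<Longrightarrow> j < i \<Longrightarrow> e \<in> M j \<Longrightarrow> \<not> e \<subseteq> matched_vertices (M i)"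
  shows "card S \<le> ORS (card V) s"
proof -
  obtain \<phi> where \<phi>: "bij_betw \<phi> V {0..<card V}"
    using ex_bij_betw_finite_nat[OF \<open>finite V\<close>] by blast
  then have inj: "inj_on \<phi> V" and range: "\<phi> ` V = {..<card V}"
    by (auto simp: bij_betw_def atLeast0LessThan)
  obtain h where h_range: "h ` {1..card S} = S" and h_mono: "strict_mono_on {1..card S} h"
    using obtain_strict_mono_enumeration[OF \<open>finite S\<close>] .
  have h_inj: "inj_on h {1..card S}"
    using h_mono by (rule strict_mono_on_imp_inj_on)
  define N where "N k = (`) \<phi> ` M (h k)" for k
  have hS: "h k \<in> S" if "k \<in> {1..card S}" for k
    using h_range that by blast
  have edge_in_V: "e \<subseteq> V" if "k \<in> {1..card S}" "e \<in> M (h k)" for k e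
    using matching[OF hS[OF that(1)]] that(2) unfolding matched_vertices_def by blast
  have matched_N: "matched_vertices (N k) = \<phi> ` matched_vertices (M (h k))" for k
    unfolding matched_vertices_def N_def by auto
  have "is_ORS_graph (card V) s (card S)"
    unfolding is_ORS_graph_def
  proof (intro exI[of _ N] conjI ballI)
    show "ordered_induced N (card S)"
      unfolding ordered_induced_def pairwise_edge_disjoint_def
    proof (intro conjI ballI impI)
      fix k l assume k: "k \<in> {1..card S}" and l: "l \<in> {1..card S}" and "k \<noteq> l"
      then have "M (h k) \<inter> M (h l) = {}"
        using disjoint hS h_inj by (meson inj_on_eq_iff)
      then show "N k \<inter> N l = {}"
        unfolding N_def using inj edge_in_V[OF k] edge_in_V[OF l]
        by (auto simp: inj_on_image_eq_iff)
    next
      fix k assume "k \<in> {1..card S}"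
      then show "is_matching (N k)"
        unfolding N_def using is_matching_image[OF _ _ inj] matching hS by blast
    next
      fix k e assume k: "k \<in> {1..card S}" and "e \<in> (\<Union>l\<in>{1..<k}. N l)"
      then obtain l a where l: "l \<in> {1..card S}" "l < k" and a: "a \<in> M (h l)" and e: "e = \<phi> ` a"
        unfolding N_def by auto
      have "\<not> a \<subseteq> matched_vertices (M (h k))"
        using induced[OF hS[OF k] hS[OF l(1)] _ a] h_mono k l unfolding strict_mono_on_def by blast
      moreover have "matched_vertices (M (h k)) \<subseteq> V"
        using matching hS[OF k] by blast
      ultimately show "\<not> e \<subseteq> matched_vertices (N k)"
        unfolding e matched_N using inj_on_image_mem_iff[OF inj] edge_in_V[OF l(1) a] by blast
    qed
  next
    fix k assume k: "k \<in> {1..card S}"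
    show "matched_vertices (N k) \<subseteq> {..<card V}"
      unfolding matched_N using matching[OF hS[OF k]] range by blast
    have "inj_on ((`) \<phi>) (M (h k))"
      using inj_on_subset[OF inj_on_image_Pow[OF inj]] edge_in_V[OF k] by blast
    then show "card (N k) = s"
      unfolding N_def using card_image matching[OF hS[OF k]] by metis
  qed
  then show ?thesis
    using is_ORS_graph_le_ORS \<open>1 \<le> s\<close> by blast
qed

lemma card_matching_edges_avoiding:
  assumes "is_matching M" "finite M" "finite F" "\<And>e. e \<in> F \<Longrightarrow> card e = 2"
  shows "card M \<le> card {f \<in> M. \<forall>e\<in>F. f \<inter> e = {}} + 2 * card F"
proof -
  let ?P = "{f \<in> M. \<forall>e\<in>F. f \<inter> e = {}}"
  have "card (M - ?P) \<le> card (\<Union>e\<in>F. {f \<in> M. f \<inter> e \<noteq> {}})"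
    using assms(2,3) by (intro card_mono) auto
  also have "\<dots> \<le> (\<Sum>e\<in>F. card {f \<in> M. f \<inter> e \<noteq> {}})"
    by (rule card_UN_le[OF assms(3)])
  also have "\<dots> \<le> (\<Sum>e\<in>F. card e)"
    using assms(1,4) by (intro sum_mono card_matching_edges_meeting) (auto intro: card_ge_0_finite)
  also have "\<dots> = 2 * card F"
    using assms(4) by simp
  finally show ?thesis
    using card_Diff_subset[of ?P M] card_mono[of M ?P] assms(2) by (auto intro: finite_subset)
qed

lemma obtain_ordered_induced_trimming:
  fixes M :: "nat \<Rightarrow> 'a set set"
  assumes matching: "\<And>i. i \<in> S \<Longrightarrow> is_matching (M i) \<and> finite (M i)"
    and large: "\<And>i. i \<in> S \<Longrightarrow>
      s + 2 * card {e \<in> \<Union>(M ` {j \<in> S. j < i}). e \<subseteq> matched_vertices (M i)} \<le> card (M i)"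
  obtains M' where "\<And>i. i \<in> S \<Longrightarrow> M' i \<subseteq> M i \<and> card (M' i) = s"
    and "\<And>i j e. i \<in> S \<Longrightarrow> j \<in> S \<Longrightarrow> j < i \<Longrightarrow> e \<in> M' j \<Longrightarrow> \<not> e \<subseteq> matched_vertices (M' i)"
proof -
  define F where "F i = {e \<in> \<Union>(M ` {j \<in> S. j < i}). e \<subseteq> matched_vertices (M i)}" for i
  define P where "P i = {f \<in> M i. \<forall>e\<in>F i. f \<inter> e = {}}" for i
  have edge_card: "card e = 2" if "i \<in> S" "e \<in> M i" for i e
    using matching[OF that(1)] that(2) unfolding is_matching_def by blast
  have "s \<le> card (P i)" if i: "i \<in> S" for i
  proof -
    have "finite (F i)"
      using finite_matched_vertices matching[OF i] unfolding F_def by (auto intro: finite_subset[of _ "Pow _"])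
    moreover have "card e = 2" if "e \<in> F i" for e
      using that edge_card unfolding F_def by auto
    ultimately show ?thesis
      using card_matching_edges_avoiding[of "M i" "F i"] matching[OF i] large[OF i]
      unfolding P_def F_def by fastforce
  qed
  then have "\<forall>i\<in>S. \<exists>T. T \<subseteq> P i \<and> card T = s"
    by (meson obtain_subset_with_card_n)
  then obtain M' where M': "\<And>i. i \<in> S \<Longrightarrow> M' i \<subseteq> P i \<and> card (M' i) = s"
    by metis
  show thesis
  proof (rule that)
    show "M' i \<subseteq> M i \<and> card (M' i) = s" if "i \<in> S" for i
      using M'[OF that] unfolding P_def by blast
  next
    fix i j e assume i: "i \<in> S" and j: "j \<in> S" "j < i" and e: "e \<in> M' j"
    show "\<not> e \<subseteq> matched_vertices (M' i)"
    proof
      assume e_inside: "e \<subseteq> matched_vertices (M' i)"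
      have "e \<in> M j"
        using M'[OF j(1)] e unfolding P_def by blast
      then obtain v where "v \<in> e"
        using edge_card[OF j(1)] by fastforce
      then obtain f where f: "f \<in> M' i" "v \<in> f"
        using e_inside unfolding matched_vertices_def by blast
      have "matched_vertices (M' i) \<subseteq> matched_vertices (M i)"
        using M'[OF i] unfolding P_def matched_vertices_def by blast
      then have "e \<in> F i"
        using \<open>e \<in> M j\<close> j e_inside unfolding F_def by blast
      then show False
        using M'[OF i] f \<open>v \<in> e\<close> unfolding P_def by blast
    qed
  qed
qed

section \<open>Pigeonhole arguments\<close>

lemma obtain_sum_le_card_mult:
  fixes f :: "'a \<Rightarrow> real"
  assumes "finite A" "A \<noteq> {}"
  obtains a where "a \<in> A" "sum f A \<le> card A * f a"
proof -
  have "Max (f ` A) \<in> f ` A"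
    using assms by simp
  then obtain a where "a \<in> A" "f a = Max (f ` A)"
    by (metis imageE)
  then show thesis
    using that sum_bounded_above[of A f "f a"] assms(1) by simp
qed

text \<open>Colour the indices in increasing order, giving each the colour whose earlier class sends
  it the least weight; that weight is at most the average over the \<open>m\<close> colours.\<close>
lemma exists_colouring_light_back_weight:
  fixes w :: "nat \<Rightarrow> nat \<Rightarrow> real" and I :: "nat set"
  assumes "finite I" "0 < m"
  shows "\<exists>c. (\<forall>i\<in>I. c i < m) \<and>
    (\<forall>i\<in>I. real m * (\<Sum>j\<in>{j \<in> I. j < i \<and> c j = c i}. w j i) \<le> (\<Sum>j\<in>{j \<in> I. j < i}. w j i))"
  using assms(1)
proof (induction I rule: finite_linorder_max_induct)
  case empty
  then show ?case by simp
next
  case (insert b A)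
  then obtain c where c_range: "\<forall>i\<in>A. c i < m"
    and c_light: "\<forall>i\<in>A. real m * (\<Sum>j\<in>{j \<in> A. j < i \<and> c j = c i}. w j i) \<le> (\<Sum>j\<in>{j \<in> A. j < i}. w j i)"
    by blast
  define weight where "weight x = (\<Sum>j\<in>{j \<in> A. c j = x}. w j b)" for x
  obtain x where x: "x < m" "weight x = Min (weight ` {..<m})"
    using Min_in[of "weight ` {..<m}"] \<open>0 < m\<close> by fastforce
  have "real m * weight x \<le> (\<Sum>y<m. weight y)"
    using sum_bounded_below[of "{..<m}" "weight x" weight] x by simp
  also have "\<dots> = (\<Sum>j\<in>A. w j b)"
    unfolding weight_def using sum.group[of A "{..<m}" c "\<lambda>j. w j b"] c_range insert.hyps(1) by auto
  finally have b_light: "real m * weight x \<le> (\<Sum>j\<in>A. w j b)" .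
  have "b \<notin> A"
    using insert.hyps(2) by blast
  show ?case
  proof (intro exI[of _ "c(b := x)"] conjI ballI)
    fix i assume "i \<in> insert b A"
    then show "(c(b := x)) i < m"
      using c_range x(1) by auto
  next
    fix i assume i: "i \<in> insert b A"
    show "real m * (\<Sum>j\<in>{j \<in> insert b A. j < i \<and> (c(b := x)) j = (c(b := x)) i}. w j i)
      \<le> (\<Sum>j\<in>{j \<in> insert b A. j < i}. w j i)"
    proof (cases "i = b")
      case True
      have "{j \<in> insert b A. j < i \<and> (c(b := x)) j = (c(b := x)) i} = {j \<in> A. c j = x}"
        "{j \<in> insert b A. j < i} = A"
        using True insert.hyps(2) \<open>b \<notin> A\<close> by auto
      then show ?thesis
        using b_light True unfolding weight_def by simp
    next
      case False
      then have "i \<in> A" "i < b"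
        using i insert.hyps(2) by auto
      then have "{j \<in> insert b A. j < i \<and> (c(b := x)) j = (c(b := x)) i} = {j \<in> A. j < i \<and> c j = c i}"
        "{j \<in> insert b A. j < i} = {j \<in> A. j < i}"
        using \<open>b \<notin> A\<close> by auto
      then show ?thesis
        using c_light \<open>i \<in> A\<close> by simp
    qed
  qed
qed

lemma dyadic_floor_log_bounds:
  fixes d :: real
  assumes "1 \<le> d"
  shows "2 ^ nat \<lfloor>log 2 d\<rfloor> \<le> d" "d < 2 ^ (nat \<lfloor>log 2 d\<rfloor> + 1)"
proof -
  have "0 \<le> \<lfloor>log 2 d\<rfloor>"
    using assms by simp
  then have "real_of_int \<lfloor>log 2 d\<rfloor> = real (nat \<lfloor>log 2 d\<rfloor>)"
    "real_of_int (\<lfloor>log 2 d\<rfloor> + 1) = real (nat \<lfloor>log 2 d\<rfloor> + 1)"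
    by simp_all
  moreover have "2 powr real_of_int \<lfloor>log 2 d\<rfloor> \<le> d \<and> d < 2 powr real_of_int (\<lfloor>log 2 d\<rfloor> + 1)"
    using floor_log_eq_powr_iff[of d 2 "\<lfloor>log 2 d\<rfloor>"] assms by simp
  ultimately show "2 ^ nat \<lfloor>log 2 d\<rfloor> \<le> d" "d < 2 ^ (nat \<lfloor>log 2 d\<rfloor> + 1)"
    by (simp_all add: powr_realpow powr_add)
qed

lemma dyadic_pigeonhole:
  fixes d :: "'a \<Rightarrow> real"
  assumes "finite I" "1 \<le> N" and range: "\<And>i. i \<in> I \<Longrightarrow> 1 \<le> d i \<and> d i \<le> N"
  obtains k :: nat where
    "(\<Sum>i\<in>I. 1 / d i) \<le> (log 2 N + 1) * card {i \<in> I. 2 ^ k \<le> d i \<and> d i \<le> 2 ^ (k + 1)} / 2 ^ k"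
proof -
  define level where "level i = nat \<lfloor>log 2 (d i)\<rfloor>" for i
  define K where "K = nat \<lfloor>log 2 N\<rfloor>"
  define band where "band k = {i \<in> I. level i = k}" for k
  have level_le: "level i \<le> K" if "i \<in> I" for i
    unfolding level_def K_def using range[OF that] by (intro nat_mono floor_mono) simp
  have band_finite: "finite (band k)" for k
    using assms(1) unfolding band_def by simp
  have band_sub: "band k \<subseteq> {i \<in> I. 2 ^ k \<le> d i \<and> d i \<le> 2 ^ (k + 1)}" for k
    using dyadic_floor_log_bounds range unfolding band_def level_def by fastforce
  have "(\<Sum>i\<in>I. 1 / d i) = (\<Sum>k\<le>K. \<Sum>i\<in>band k. 1 / d i)"
    unfolding band_def using level_le assms(1) by (intro sum.group[symmetric]) auto
  also have "\<dots> \<le> (\<Sum>k\<le>K. card (band k) / 2 ^ k)"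
  proof (intro sum_mono)
    fix k
    have "(\<Sum>i\<in>band k. 1 / d i) \<le> (\<Sum>i\<in>band k. 1 / 2 ^ k)"
      using band_sub by (intro sum_mono frac_le) auto
    then show "(\<Sum>i\<in>band k. 1 / d i) \<le> card (band k) / 2 ^ k"
      by simp
  qed
  finally have sum_le_bands: "(\<Sum>i\<in>I. 1 / d i) \<le> (\<Sum>k\<le>K. card (band k) / 2 ^ k)" .
  obtain k where "(\<Sum>k\<le>K. card (band k) / 2 ^ k) \<le> card {..K} * (card (band k) / 2 ^ k)"
    using obtain_sum_le_card_mult[of "{..K}"] by blast
  moreover have "real K \<le> log 2 N"
    unfolding K_def using \<open>1 \<le> N\<close> by simp
  moreover have "card (band k) \<le> card {i \<in> I. 2 ^ k \<le> d i \<and> d i \<le> 2 ^ (k + 1)}"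
    using assms(1) band_sub by (intro card_mono) auto
  ultimately have "(\<Sum>k\<le>K. card (band k) / 2 ^ k)
      \<le> (log 2 N + 1) * (card {i \<in> I. 2 ^ k \<le> d i \<and> d i \<le> 2 ^ (k + 1)} / 2 ^ k)"
    by (smt (verit) card_atMost divide_right_mono mult_mono of_nat_0_le_iff of_nat_Suc of_nat_mono
        zero_le_divide_iff zero_le_power)
  with sum_le_bands have "(\<Sum>i\<in>I. 1 / d i)
      \<le> (log 2 N + 1) * (card {i \<in> I. 2 ^ k \<le> d i \<and> d i \<le> 2 ^ (k + 1)} / 2 ^ k)"
    by linarith
  then show thesis
    by (intro that) (simp only: times_divide_eq_right)
qed

lemma log2_plus_one_le_ln:
  assumes "2 \<le> x"
  shows "log 2 x + 1 \<le> 4 * ln x"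
proof -
  have "ln 2 \<ge> (1 / 2 :: real)"
    using ln_le_minus_one[of "1 / 2"] by (simp add: ln_div)
  moreover have "ln 2 \<le> ln x"
    using assms by simp
  ultimately have "log 2 x \<le> 2 * ln x"
    using ln_ge_zero[of x] assms by (auto simp: log_def divide_le_eq)
  with \<open>ln 2 \<le> ln x\<close> \<open>ln 2 \<ge> 1 / 2\<close> show ?thesis
    by linarith
qed

section \<open>Densities of a sequence of matchings\<close>

definition back_weight :: "(nat \<Rightarrow> 'a set set) \<Rightarrow> nat \<Rightarrow> nat \<Rightarrow> real" where
  "back_weight M j i = real (card {e \<in> M j. e \<subseteq> matched_vertices (M i)}) / real (card (M i))"

locale matching_sequence =
  fixes V :: "'a set" and M :: "nat \<Rightarrow> 'a set set" and t r :: nat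
  assumes finite_V: "finite V"
    and matching: "\<And>i. i \<in> {1..t} \<Longrightarrow> is_matching (M i)"
    and matched_subset: "\<And>i. i \<in> {1..t} \<Longrightarrow> matched_vertices (M i) \<subseteq> V"
    and card_ge: "\<And>i. i \<in> {1..t} \<Longrightarrow> r \<le> card (M i)"
    and r_pos: "1 \<le> r"
    and edge_disjoint: "pairwise_edge_disjoint M t"
begin

lemma finite_edges:
  assumes "i \<in> {1..t}"
  shows "finite (M i)"
  using finite_UnionD finite_subset[OF matched_subset[OF assms] finite_V]
  unfolding matched_vertices_def by blast

lemma card_pos:
  assumes "i \<in> {1..t}"
  shows "0 < card (M i)"
  using card_ge[OF assms] r_pos by linarith

lemma disjoint: "i \<in> {1..t} \<Longrightarrow> j \<in> {1..t} \<Longrightarrow> i \<noteq> j \<Longrightarrow> M i \<inter> M j = {}"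
  using edge_disjoint unfolding pairwise_edge_disjoint_def by blast

lemma card_edges_inside:
  assumes "J \<subseteq> {1..t}"
  shows "card {e \<in> \<Union>(M ` J). e \<subseteq> X} = (\<Sum>j\<in>J. card {e \<in> M j. e \<subseteq> X})"
proof -
  have "{e \<in> \<Union>(M ` J). e \<subseteq> X} = (\<Union>j\<in>J. {e \<in> M j. e \<subseteq> X})"
    by auto
  also have "card \<dots> = (\<Sum>j\<in>J. card {e \<in> M j. e \<subseteq> X})"
  proof (rule card_UN_disjoint)
    show "finite J"
      using assms finite_subset by blast
    show "\<forall>j\<in>J. finite {e \<in> M j. e \<subseteq> X}"
      using assms finite_edges by auto
    show "\<forall>j\<in>J. \<forall>k\<in>J. j \<noteq> k \<longrightarrow> {e \<in> M j. e \<subseteq> X} \<inter> {e \<in> M k. e \<subseteq> X} = {}"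
    proof (intro ballI impI)
      fix j k assume "j \<in> J" "k \<in> J" "j \<noteq> k"
      then have "M j \<inter> M k = {}"
        using assms disjoint by (meson subsetD)
      then show "{e \<in> M j. e \<subseteq> X} \<inter> {e \<in> M k. e \<subseteq> X} = {}"
        by blast
    qed
  qed
  finally show ?thesis .
qed

lemma density_eq:
  assumes i: "i \<in> {1..t}"
  shows "density M i = 1 + (\<Sum>j\<in>{1..<i}. back_weight M j i)"
proof -
  let ?inside = "\<lambda>j. {e \<in> M j. e \<subseteq> matched_vertices (M i)}"
  have earlier: "{1..<i} \<subseteq> {1..t}"
    using i by auto
  have "{1..i} = insert i {1..<i}"
    using i by auto
  then have "prefix_edges M i = \<Union>(M ` {1..<i}) \<union> M i"
    unfolding prefix_edges_def by auto
  then have split: "{e \<in> prefix_edges M i. e \<subseteq> matched_vertices (M i)}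
      = {e \<in> \<Union>(M ` {1..<i}). e \<subseteq> matched_vertices (M i)} \<union> M i"
    unfolding matched_vertices_def by auto
  have disj: "{e \<in> \<Union>(M ` {1..<i}). e \<subseteq> matched_vertices (M i)} \<inter> M i = {}"
    using disjoint[OF _ i] earlier by fastforce
  have "finite (\<Union>(M ` {1..<i}))"
    using finite_edges earlier by blast
  then have fin: "finite {e \<in> \<Union>(M ` {1..<i}). e \<subseteq> matched_vertices (M i)}"
    by simp
  have "card {e \<in> prefix_edges M i. e \<subseteq> matched_vertices (M i)}
      = (\<Sum>j\<in>{1..<i}. card (?inside j)) + card (M i)"
    unfolding split card_Un_disjoint[OF fin finite_edges[OF i] disj] card_edges_inside[OF earlier] ..
  then show ?thesis
    using card_pos[OF i]
    by (simp add: density_def back_weight_def add_divide_distrib sum_divide_distrib)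
qed

lemma density_ge_one: "i \<in> {1..t} \<Longrightarrow> 1 \<le> density M i"
  using density_eq by (simp add: back_weight_def sum_nonneg)

text \<open>All edges inside \<open>V(M_i)\<close> are among its \<open>(2|M_i|) choose 2\<close> pairs, and \<open>2|M_i| \<le> |V|\<close>.\<close>
lemma density_le_card_V:
  assumes i: "i \<in> {1..t}"
  shows "density M i \<le> card V"
proof -
  let ?U = "matched_vertices (M i)"
  have U_card: "card ?U = 2 * card (M i)"
    using card_matched_vertices matching finite_edges i by blast
  have "card ?U \<le> card V"
    using card_mono[OF finite_V matched_subset[OF i]] .
  have "finite ?U"
    using finite_subset[OF matched_subset[OF i] finite_V] .
  have "{e \<in> prefix_edges M i. e \<subseteq> ?U} \<subseteq> {e. e \<subseteq> ?U \<and> card e = 2}"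
    using i matching unfolding prefix_edges_def is_matching_def by fastforce
  then have "card {e \<in> prefix_edges M i. e \<subseteq> ?U} \<le> card {e. e \<subseteq> ?U \<and> card e = 2}"
    using \<open>finite ?U\<close> by (intro card_mono) auto
  also have "\<dots> = card ?U choose 2"
    using n_subsets[OF \<open>finite ?U\<close>] .
  also have "\<dots> = card (M i) * (2 * card (M i) - 1)"
    unfolding U_card by (simp add: choose_two)
  also have "\<dots> \<le> card (M i) * card V"
    using \<open>card ?U \<le> card V\<close> U_card by (intro mult_le_mono2) linarith
  finally have "real (card {e \<in> prefix_edges M i. e \<subseteq> ?U}) \<le> real (card V) * real (card (M i))"
    by (simp only: of_nat_mult[symmetric] of_nat_le_iff mult.commute)
  then show ?thesis
    using card_pos[OF i] unfolding density_def by (simp add: pos_divide_le_eq)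
qed

lemma card_V_ge_two:
  assumes "1 \<le> t"
  shows "2 \<le> card V"
proof -
  obtain e where e: "e \<in> M 1"
    using card_pos assms by fastforce
  then have "card e = 2"
    using matching assms unfolding is_matching_def by auto
  moreover have "e \<subseteq> V"
    using e matched_subset assms unfolding matched_vertices_def by auto
  ultimately show ?thesis
    using card_mono[OF finite_V, of e] by linarith
qed

lemma light_class_card_le_ORS:
  fixes \<alpha> :: real
  assumes S: "S \<subseteq> {1..t}" and "0 < \<alpha>" "\<alpha> < 1"
    and light: "\<And>i. i \<in> S \<Longrightarrow> (\<Sum>j\<in>{j \<in> S. j < i}. back_weight M j i) \<le> \<alpha> / 2"
  shows "card S \<le> ORS (card V) (nat \<lceil>(1 - \<alpha>) * r\<rceil>)"
proof -
  define s where "s = nat \<lceil>(1 - \<alpha>) * r\<rceil>"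
  have "0 < (1 - \<alpha>) * r"
    using \<open>\<alpha> < 1\<close> r_pos by simp
  then have "1 \<le> s"
    unfolding s_def by linarith
  have large: "s + 2 * card {e \<in> \<Union>(M ` {j \<in> S. j < i}). e \<subseteq> matched_vertices (M i)} \<le> card (M i)"
    if i: "i \<in> S" for i
  proof -
    define F where "F = card {e \<in> \<Union>(M ` {j \<in> S. j < i}). e \<subseteq> matched_vertices (M i)}"
    have "{j \<in> S. j < i} \<subseteq> {1..t}"
      using S by blast
    then have "real F = (\<Sum>j\<in>{j \<in> S. j < i}. real (card {e \<in> M j. e \<subseteq> matched_vertices (M i)}))"
      unfolding F_def card_edges_inside[OF \<open>{j \<in> S. j < i} \<subseteq> {1..t}\<close>] by simp
    also have "\<dots> = card (M i) * (\<Sum>j\<in>{j \<in> S. j < i}. back_weight M j i)"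
      using card_pos[of i] i S unfolding back_weight_def by (auto simp: sum_distrib_left)
    also have "\<dots> \<le> card (M i) * (\<alpha> / 2)"
      using light[OF i] by (intro mult_left_mono) auto
    finally have "real F \<le> card (M i) * (\<alpha> / 2)" .
    moreover have "(1 - \<alpha>) * r \<le> (1 - \<alpha>) * card (M i)"
      using card_ge i S \<open>\<alpha> < 1\<close> by (intro mult_left_mono) auto
    ultimately have "(1 - \<alpha>) * r \<le> card (M i) - 2 * real F"
      by (simp add: algebra_simps)
    then have "\<lceil>(1 - \<alpha>) * r\<rceil> \<le> int (card (M i)) - 2 * int F"
      by (simp add: ceiling_le_iff)
    moreover have "int s = \<lceil>(1 - \<alpha>) * r\<rceil>"
      unfolding s_def using \<open>0 < (1 - \<alpha>) * r\<close> by simp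
    ultimately show ?thesis
      unfolding F_def by linarith
  qed
  have matching_finite: "is_matching (M i) \<and> finite (M i)" if "i \<in> S" for i
    using matching finite_edges S that by blast
  obtain M' where M': "\<And>i. i \<in> S \<Longrightarrow> M' i \<subseteq> M i \<and> card (M' i) = s"
    and induced: "\<And>i j e. i \<in> S \<Longrightarrow> j \<in> S \<Longrightarrow> j < i \<Longrightarrow> e \<in> M' j \<Longrightarrow> \<not> e \<subseteq> matched_vertices (M' i)"
    using obtain_ordered_induced_trimming[OF matching_finite large] by blast
  have "card S \<le> ORS (card V) s"
  proof (rule ordered_induced_family_card_le_ORS[OF finite_V _ \<open>1 \<le> s\<close> _ _ induced])
    show "finite S"
      using S finite_subset by blast
    fix i assume i: "i \<in> S"
    then have "i \<in> {1..t}"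
      using S by blast
    show "is_matching (M' i) \<and> matched_vertices (M' i) \<subseteq> V \<and> card (M' i) = s"
      using M'[OF i] is_matching_subset[OF matching[OF \<open>i \<in> {1..t}\<close>]] matched_subset[OF \<open>i \<in> {1..t}\<close>]
      unfolding matched_vertices_def by blast
    fix j assume "j \<in> S" "i \<noteq> j"
    then have "M i \<inter> M j = {}"
      using disjoint \<open>i \<in> {1..t}\<close> S by blast
    then show "M' i \<inter> M' j = {}"
      using M'[OF i] M'[OF \<open>j \<in> S\<close>] by blast
  qed
  then show ?thesis
    unfolding s_def .
qed

lemma card_density_class_le:
  fixes \<alpha> D :: real
  assumes B: "B \<subseteq> {1..t}" and "0 < \<alpha>" "\<alpha> < 1" "1 \<le> D"
    and bounded: "\<And>i. i \<in> B \<Longrightarrow> density M i \<le> D"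
  shows "card B \<le> 4 * D / \<alpha> * ORS (card V) (nat \<lceil>(1 - \<alpha>) * r\<rceil>)"
proof -
  define m where "m = nat \<lceil>2 * D / \<alpha>\<rceil>"
  have "1 \<le> 2 * D / \<alpha>"
    using \<open>0 < \<alpha>\<close> \<open>\<alpha> < 1\<close> \<open>1 \<le> D\<close> by (simp add: le_divide_eq)
  moreover have "4 * D / \<alpha> = 2 * (2 * D / \<alpha>)"
    by simp
  ultimately have m_ge: "2 * D / \<alpha> \<le> m" and m_le: "m \<le> 4 * D / \<alpha>" and "0 < m"
    unfolding m_def by linarith+
  have "finite B"
    using B finite_subset by blast
  then obtain c where c_range: "\<forall>i\<in>B. c i < m"
    and c_light: "\<forall>i\<in>B. real m * (\<Sum>j\<in>{j \<in> B. j < i \<and> c j = c i}. back_weight M j i)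
      \<le> (\<Sum>j\<in>{j \<in> B. j < i}. back_weight M j i)"
    using exists_colouring_light_back_weight[of B m "back_weight M"] \<open>0 < m\<close> by blast
  define colour where "colour x = {i \<in> B. c i = x}" for x
  have "real (card B) = (\<Sum>x<m. real (card (colour x)))"
    unfolding colour_def using sum.group[of B "{..<m}" c "\<lambda>_. 1 :: real"] \<open>finite B\<close> c_range by fastforce
  then obtain x where card_B: "real (card B) \<le> real m * real (card (colour x))"
    using obtain_sum_le_card_mult[of "{..<m}" "\<lambda>x. real (card (colour x))"] \<open>0 < m\<close> by auto
  have "card (colour x) \<le> ORS (card V) (nat \<lceil>(1 - \<alpha>) * r\<rceil>)"
  proof (rule light_class_card_le_ORS)
    show "colour x \<subseteq> {1..t}"
      using B unfolding colour_def by blast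
    show "0 < \<alpha>" "\<alpha> < 1"
      by fact+
    fix i assume i: "i \<in> colour x"
    define W where "W = (\<Sum>j\<in>{j \<in> colour x. j < i}. back_weight M j i)"
    have "0 \<le> W"
      unfolding W_def back_weight_def by (simp add: sum_nonneg)
    have "i \<in> {1..t}"
      using i B unfolding colour_def by blast
    have "i \<in> B" "c i = x"
      using i unfolding colour_def by auto
    then have "{j \<in> colour x. j < i} = {j \<in> B. j < i \<and> c j = c i}"
      unfolding colour_def by auto
    then have "real m * W \<le> (\<Sum>j\<in>{j \<in> B. j < i}. back_weight M j i)"
      unfolding W_def using c_light \<open>i \<in> B\<close> by simp
    also have "\<dots> \<le> (\<Sum>j\<in>{1..<i}. back_weight M j i)"
      using B by (intro sum_mono2) (auto simp: back_weight_def)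
    also have "\<dots> \<le> D"
      using density_eq[OF \<open>i \<in> {1..t}\<close>] bounded i unfolding colour_def by force
    finally have "2 * D / \<alpha> * W \<le> D"
      using mult_right_mono[OF m_ge \<open>0 \<le> W\<close>] by linarith
    then have "D * (2 * W) \<le> D * \<alpha>"
      using \<open>0 < \<alpha>\<close> by (simp add: field_simps)
    then show "W \<le> \<alpha> / 2"
      using \<open>1 \<le> D\<close> mult_left_le_imp_le[of D "2 * W" \<alpha>] by simp
  qed
  then have "real m * card (colour x) \<le> real m * ORS (card V) (nat \<lceil>(1 - \<alpha>) * r\<rceil>)"
    by (intro mult_left_mono) auto
  also have "\<dots> \<le> 4 * D / \<alpha> * ORS (card V) (nat \<lceil>(1 - \<alpha>) * r\<rceil>)"
    using m_le by (intro mult_right_mono) auto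
  finally show ?thesis
    using card_B by linarith
qed

lemma sum_inverse_density_le:
  fixes \<alpha> :: real
  assumes "0 < \<alpha>" "\<alpha> < 1"
  shows "(\<Sum>i=1..t. 1 / density M i) \<le> 32 / \<alpha> * ORS (card V) (nat \<lceil>(1 - \<alpha>) * r\<rceil>) * ln (card V)"
proof (cases "t = 0")
  case True
  have "0 \<le> ln (real (card V))"
    by (cases "card V = 0") auto
  with True \<open>0 < \<alpha>\<close> show ?thesis
    by simp
next
  case False
  define R where "R = real (ORS (card V) (nat \<lceil>(1 - \<alpha>) * r\<rceil>))"
  have "2 \<le> card V"
    using card_V_ge_two False by simp
  then obtain k where sum_le: "(\<Sum>i\<in>{1..t}. 1 / density M i)
      \<le> (log 2 (card V) + 1) * card {i \<in> {1..t}. 2 ^ k \<le> density M i \<and> density M i \<le> 2 ^ (k + 1)} / 2 ^ k"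
    using dyadic_pigeonhole[of "{1..t}" "real (card V)" "density M"] density_ge_one density_le_card_V
    by force
  have "card {i \<in> {1..t}. 2 ^ k \<le> density M i \<and> density M i \<le> 2 ^ (k + 1)} \<le> 4 * 2 ^ (k + 1) / \<alpha> * R"
    unfolding R_def using assms one_le_power[of "2 :: real" "k + 1"] by (intro card_density_class_le) auto
  then have "card {i \<in> {1..t}. 2 ^ k \<le> density M i \<and> density M i \<le> 2 ^ (k + 1)} / 2 ^ k \<le> 8 / \<alpha> * R"
    by (simp add: divide_le_eq mult_ac)
  moreover have "0 \<le> log 2 (card V) + 1"
    using \<open>2 \<le> card V\<close> by simp
  ultimately have "(\<Sum>i\<in>{1..t}. 1 / density M i) \<le> (log 2 (card V) + 1) * (8 / \<alpha> * R)"
    using sum_le by (smt (verit) mult_left_mono times_divide_eq_right)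
  also have "\<dots> \<le> 4 * ln (card V) * (8 / \<alpha> * R)"
    using log2_plus_one_le_ln[of "card V"] \<open>2 \<le> card V\<close> \<open>0 < \<alpha>\<close> unfolding R_def
    by (intro mult_right_mono) auto
  finally show ?thesis
    unfolding R_def by (simp add: mult_ac)
qed

end

theorem lemma4p5:
  "\<exists>C::real. \<forall>(V::nat set) (n::nat) (t::nat) (r::nat) (M::nat \<Rightarrow> nat set set) (\<alpha>::real).
     finite V \<and> card V = n \<and> r \<ge> 1 \<and>
     (\<forall>i\<in>{1..t}. is_matching (M i) \<and> matched_vertices (M i) \<subseteq> V \<and> card (M i) \<ge> r) \<and>
     pairwise_edge_disjoint M t \<and> 0 < \<alpha> \<and> \<alpha> < 1
     \<longrightarrow> (\<Sum>i=1..t. 1 / density M i)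
         \<le> C * (1 / \<alpha>^2) * real (ORS n (nat \<lceil>(1 - \<alpha>) * real r\<rceil>)) * ln (real n)"
proof (intro exI[of _ 32] allI impI)
  fix V :: "nat set" and n t r :: nat and M :: "nat \<Rightarrow> nat set set" and \<alpha> :: real
  assume hyps: "finite V \<and> card V = n \<and> r \<ge> 1 \<and>
     (\<forall>i\<in>{1..t}. is_matching (M i) \<and> matched_vertices (M i) \<subseteq> V \<and> card (M i) \<ge> r) \<and>
     pairwise_edge_disjoint M t \<and> 0 < \<alpha> \<and> \<alpha> < 1"
  then interpret matching_sequence V M t r
    by unfold_locales auto
  define R where "R = real (ORS n (nat \<lceil>(1 - \<alpha>) * real r\<rceil>)) * ln (real n)"
  have "0 < \<alpha>" "\<alpha> < 1"
    using hyps by auto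
  have "(\<Sum>i=1..t. 1 / density M i) \<le> 32 / \<alpha> * R"
    using sum_inverse_density_le[OF \<open>0 < \<alpha>\<close> \<open>\<alpha> < 1\<close>] hyps unfolding R_def by (simp add: mult.assoc)
  also have "\<dots> \<le> 32 * (1 / \<alpha>^2) * R"
  proof (rule mult_right_mono)
    show "32 / \<alpha> \<le> 32 * (1 / \<alpha>^2)"
      using \<open>0 < \<alpha>\<close> \<open>\<alpha> < 1\<close> by (simp add: divide_simps power2_eq_square)
    show "0 \<le> R"
      unfolding R_def by (cases "n = 0") auto
  qed
  finally show "(\<Sum>i=1..t. 1 / density M i) \<le> 32 * (1 / \<alpha>^2) * real (ORS n (nat \<lceil>(1 - \<alpha>) * real r\<rceil>)) * ln (real n)"
    unfolding R_def by (simp add: mult.assoc)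
qed

end
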